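(* Let $n=p^k$, where $p$ is an odd prime and $k>2$ is an integer, and let $G=\langle p^{k-1}-1\rangle$ be the subgroup of $\mathbb{Z}_n^\times$ generated by $p^{k-1}-1$. Then the coset index function $f_G$ is a $\left(p^k,\frac{2p^{k-1}-p^{k-2}+1}{2},\{1,p,p^k-p^{k-1}+1\}\right)$ zero-difference function.
   Context: For a subgroup $G$ of $\mathbb{Z}_n^\times$ and $r\in\mathbb{Z}_n$, the coset $rG=\{rg\mid g\in G\}$; these cosets partition $\mathbb{Z}_n$, forming a set $D_G$. The coset index function induced by $G$ is $f_G:\mathbb{Z}_n\to\mathbb{Z}_{|D_G|}$, $f_G(x)=h_G(C_x)$, where $C_x$ is the coset containing $x$ and $h_G:D_G\to\mathbb{Z}_{|D_G|}$ is a fixed bijection. A function $f:A\to B$ between finite abelian groups is an $(n,m,S)$ zero-difference function if $n=|A|$, $m=|f(A)|$, and for every nonzero $a\in A$, $|\{x\in A\mid f(x+a)=f(x)\}|\in S$. Here $A=(\mathbb{Z}_n,+)$. *)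

theory Defs
  imports Main "HOL-Computational_Algebra.Primes"
begin

text \<open>Z_n is modelled by the residues {0..<n} (type nat) with arithmetic mod n.\<close>

text \<open>Subgroup of Z_n^x generated by a unit g: in a finite group this is the set of
  all nonnegative powers of g.\<close>
definition cyc_subgroup :: "nat \<Rightarrow> nat \<Rightarrow> nat set" where
  "cyc_subgroup n g = {(g ^ i) mod n | i. True}"

definition coset_of :: "nat \<Rightarrow> nat set \<Rightarrow> nat \<Rightarrow> nat set" where
  "coset_of n G r = {(r * g) mod n | g. g \<in> G}"

definition cosets_D :: "nat \<Rightarrow> nat set \<Rightarrow> nat set set" where
  "cosets_D n G = {coset_of n G r | r. r < n}"

definition coset_index_fun :: "nat \<Rightarrow> nat set \<Rightarrow> (nat set \<Rightarrow> nat) \<Rightarrow> nat \<Rightarrow> nat" where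
  "coset_index_fun n G h x = h (coset_of n G x)"

definition zero_difference_fun :: "nat \<Rightarrow> nat \<Rightarrow> nat set \<Rightarrow> (nat \<Rightarrow> nat) \<Rightarrow> bool" where
  "zero_difference_fun n m S f \<longleftrightarrow>
     card (f ` {0..<n}) = m \<and>
     (\<forall>a \<in> {0..<n}. a \<noteq> 0 \<longrightarrow>
        card {x \<in> {0..<n}. f ((x + a) mod n) = f x} \<in> S)"

end

theory Submission
  imports Defs "HOL-Number_Theory.Cong" Complex_Main
begin

(*
  Write n = p^k and q = p^(k-1), so that q^2 = 0 (mod n). Then (q - 1)^2 = 1 - 2q (mod n), so the
  even powers of q - 1 are the residues 1 - 2iq; as 2 is invertible modulo p they exhaust the
  residues s = 1 (mod q), and the odd powers exhaust s = -1 (mod q). Hence the coset of x is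
  {y. y = +-x (mod q)}, of size 2p, if p does not divide x, and {x, -x} if it does. Summing
  1/|xG| over Z_n counts the cosets: 1 + (q - 1)/2 + (n - q)/(2p) = (2q - p^(k-2) + 1)/2.
  A shift x + a lies in xG iff q divides a or 2x + a (x a unit), resp. n divides 2x + a (p | x);
  counting solutions gives p, 1 or n - q + 1 according as p does not divide a, p but not q
  divides a, or q divides a.
*)

section \<open>Residue classes below a multiple of the modulus\<close>

lemma card_cong_less_mult:
  fixes d m c :: nat
  assumes "0 < d"
  shows "card {x. x < m * d \<and> [x = c] (mod d)} = m"
proof -
  have "{x. x < m * d \<and> [x = c] (mod d)} = (\<lambda>i. c mod d + i * d) ` {..<m}"
  proof (rule set_eqI, rule iffI)
    fix x assume x: "x \<in> {x. x < m * d \<and> [x = c] (mod d)}"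
    then have "x mod d = c mod d" and "x div d \<in> {..<m}"
      by (auto simp: cong_def less_mult_imp_div_less)
    moreover from this(1) have "x = c mod d + x div d * d" by (metis mod_div_mult_eq)
    ultimately show "x \<in> (\<lambda>i. c mod d + i * d) ` {..<m}" by blast
  next
    fix x assume "x \<in> (\<lambda>i. c mod d + i * d) ` {..<m}"
    then obtain i where "i < m" and x: "x = c mod d + i * d" by blast
    then have "x < Suc i * d" using assms by simp
    also have "\<dots> \<le> m * d" using \<open>i < m\<close> by (intro mult_le_mono1) simp
    finally show "x \<in> {x. x < m * d \<and> [x = c] (mod d)}" by (simp add: x cong_def)
  qed
  moreover have "inj_on (\<lambda>i. c mod d + i * d) {..<m}" using assms by (intro inj_onI) simp
  ultimately show ?thesis by (simp add: card_image)
qed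

lemma dvd_add_iff_cong:
  fixes d x y :: nat
  assumes "0 < d"
  shows "d dvd x + y \<longleftrightarrow> [y = (d - 1) * x] (mod d)"
proof -
  have "x + (d - 1) * x = d * x" using assms by (cases d) simp_all
  then have "d dvd x + y \<longleftrightarrow> [x + y = x + (d - 1) * x] (mod d)"
    by (simp add: cong_def dvd_eq_mod_eq_0)
  also have "\<dots> \<longleftrightarrow> [y = (d - 1) * x] (mod d)" by (rule cong_add_lcancel_nat)
  finally show ?thesis .
qed

lemma card_dvd_double_add_less_mult:
  fixes d m a :: nat
  assumes "odd d"
  shows "card {x. x < m * d \<and> d dvd 2 * x + a} = m"
proof -
  define c where "c = a * ((d - 1) div 2)"
  have "2 * c + a = a * d" using assms by (auto elim!: oddE simp: c_def algebra_simps)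
  then have "(2 * c + a) mod d = 0" by simp
  then have "d dvd 2 * x + a \<longleftrightarrow> [2 * x + a = 2 * c + a] (mod d)" for x
    by (simp add: cong_def dvd_eq_mod_eq_0)
  also have "[2 * x + a = 2 * c + a] (mod d) \<longleftrightarrow> [x = c] (mod d)" for x
    using assms by (simp add: cong_add_rcancel_nat cong_mult_lcancel_nat)
  finally show ?thesis using assms card_cong_less_mult[of d m c] by (simp add: odd_pos)
qed

lemma cong_imp_dvd_add_iff:
  fixes a b c d :: nat
  assumes "[a = b] (mod d)"
  shows "d dvd c + a \<longleftrightarrow> d dvd c + b"
  using assms unfolding cong_def dvd_eq_mod_eq_0 by (metis mod_add_right_eq)

section \<open>Cosets of a cyclic subgroup of units\<close>

lemma coprime_imp_power_cong_one:
  fixes g n :: nat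
  assumes "coprime g n" and "0 < n"
  obtains e where "0 < e" and "[g ^ e = 1] (mod n)"
proof -
  have "range (\<lambda>i. g ^ i mod n) \<subseteq> {..<n}" using assms(2) by auto
  then have "finite (range (\<lambda>i. g ^ i mod n))" by (rule finite_subset) simp
  then have "\<not> inj (\<lambda>i. g ^ i mod n)" using finite_imageD infinite_UNIV_nat by blast
  then obtain i j where "i < j" and "[g ^ j = g ^ i] (mod n)"
    unfolding inj_def cong_def by (metis linorder_neq_iff)
  then have "[g ^ i * g ^ (j - i) = g ^ i * 1] (mod n)" by (simp flip: power_add)
  then have "[g ^ (j - i) = 1] (mod n)" using assms(1) by (subst (asm) cong_mult_lcancel_nat) auto
  with \<open>i < j\<close> show thesis by (intro that[of "j - i"]) simp_all
qed

lemma coset_of_cyc_subgroup: "coset_of n (cyc_subgroup n g) x = range (\<lambda>i. x * g ^ i mod n)"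
proof -
  have "coset_of n (cyc_subgroup n g) x = (\<lambda>s. x * s mod n) ` range (\<lambda>i. g ^ i mod n)"
    unfolding coset_of_def cyc_subgroup_def by auto
  then show ?thesis by (simp add: image_image mod_mult_right_eq)
qed

lemma mem_coset_of_cyc_subgroup_self: "x < n \<Longrightarrow> x \<in> coset_of n (cyc_subgroup n g) x"
  unfolding coset_of_cyc_subgroup by (rule range_eqI[of _ _ 0]) simp

lemma coset_of_cyc_subgroup_eq:
  fixes g n x y :: nat
  assumes "coprime g n" and "x < n" and "y \<in> coset_of n (cyc_subgroup n g) x"
  shows "coset_of n (cyc_subgroup n g) y = coset_of n (cyc_subgroup n g) x"
proof -
  obtain i where y: "y = x * g ^ i mod n" using assms(3) by (auto simp: coset_of_cyc_subgroup)
  obtain e where "0 < e" and e: "[g ^ e = 1] (mod n)"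
    using assms(2) by (auto intro: coprime_imp_power_cong_one[OF assms(1)])
  have x_coset_in_y_coset: "x * g ^ j mod n = y * g ^ (i * (e - 1) + j) mod n" for j
  proof -
    have exponent: "e * i + j = i + (i * (e - 1) + j)"
      using \<open>0 < e\<close> by (cases e) (simp_all add: algebra_simps)
    have "[x * (g ^ e) ^ i * g ^ j = x * 1 ^ i * g ^ j] (mod n)"
      using e by (intro cong_mult cong_pow cong_refl)
    then have "[x * g ^ j = x * (g ^ e) ^ i * g ^ j] (mod n)" by (simp add: cong_sym)
    also have "x * (g ^ e) ^ i * g ^ j = x * g ^ (e * i + j)"
      by (simp add: power_add power_mult mult.assoc)
    also have "\<dots> = x * g ^ i * g ^ (i * (e - 1) + j)"
      by (simp only: exponent power_add mult.assoc)
    finally show ?thesis by (simp add: y cong_def mod_mult_left_eq)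
  qed
  have y_coset_in_x_coset: "y * g ^ j mod n = x * g ^ (i + j) mod n" for j
    by (simp add: y mod_mult_left_eq power_add mult.assoc)
  show ?thesis unfolding coset_of_cyc_subgroup
  proof (intro equalityI subsetI)
    fix z assume "z \<in> range (\<lambda>j. y * g ^ j mod n)"
    then obtain j where "z = y * g ^ j mod n" by blast
    then show "z \<in> range (\<lambda>j. x * g ^ j mod n)" unfolding y_coset_in_x_coset by (rule range_eqI)
  next
    fix z assume "z \<in> range (\<lambda>j. x * g ^ j mod n)"
    then obtain j where "z = x * g ^ j mod n" by blast
    then show "z \<in> range (\<lambda>j. y * g ^ j mod n)" unfolding x_coset_in_y_coset by (rule range_eqI)
  qed
qed

lemma cosets_D_eq_image: "cosets_D n G = coset_of n G ` {..<n}"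
  unfolding cosets_D_def by auto

lemma card_image_coset_index_fun:
  assumes "inj_on h (cosets_D n G)"
  shows "card (coset_index_fun n G h ` {0..<n}) = card (cosets_D n G)"
proof -
  have "coset_index_fun n G h ` {0..<n} = h ` cosets_D n G"
    unfolding coset_index_fun_def cosets_D_eq_image by (simp add: image_image atLeast0LessThan)
  then show ?thesis using assms by (simp add: card_image)
qed

lemma coset_index_fun_eq_iff:
  assumes "inj_on h (cosets_D n (cyc_subgroup n g))" and "coprime g n" and "x < n" and "y < n"
  shows "coset_index_fun n (cyc_subgroup n g) h y = coset_index_fun n (cyc_subgroup n g) h x
    \<longleftrightarrow> y \<in> coset_of n (cyc_subgroup n g) x"
proof -
  have "coset_index_fun n (cyc_subgroup n g) h y = coset_index_fun n (cyc_subgroup n g) h x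
      \<longleftrightarrow> coset_of n (cyc_subgroup n g) y = coset_of n (cyc_subgroup n g) x"
    unfolding coset_index_fun_def using assms(1,3,4)
    by (intro inj_on_eq_iff) (auto simp: cosets_D_eq_image)
  also have "\<dots> \<longleftrightarrow> y \<in> coset_of n (cyc_subgroup n g) x"
    using coset_of_cyc_subgroup_eq[OF assms(2,3)] mem_coset_of_cyc_subgroup_self[OF assms(4)]
    by auto
  finally show ?thesis .
qed

lemma card_image_eq_sum_inverse_card:
  fixes C :: "'a \<Rightarrow> 'a set" and A :: "'a set"
  assumes "finite A" and self: "\<And>x. x \<in> A \<Longrightarrow> x \<in> C x"
    and closed: "\<And>x. x \<in> A \<Longrightarrow> C x \<subseteq> A"
    and eq: "\<And>x y. x \<in> A \<Longrightarrow> y \<in> C x \<Longrightarrow> C y = C x"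
  shows "real (card (C ` A)) = (\<Sum>x\<in>A. 1 / real (card (C x)))"
proof -
  have "(\<Sum>x\<in>A. 1 / real (card (C x)))
      = (\<Sum>c\<in>C ` A. \<Sum>x\<in>{x \<in> A. C x = c}. 1 / real (card (C x)))"
    using assms(1) by (rule sum.image_gen)
  also have "\<dots> = (\<Sum>c\<in>C ` A. 1)"
  proof (rule sum.cong[OF refl])
    fix c assume "c \<in> C ` A"
    then obtain x where "x \<in> A" and c: "c = C x" by blast
    have fibre: "{y \<in> A. C y = c} = c" using self closed eq c \<open>x \<in> A\<close> by blast
    have "finite c" using closed c \<open>x \<in> A\<close> assms(1) by (blast intro: finite_subset)
    moreover have "c \<noteq> {}" using self c \<open>x \<in> A\<close> by blast
    ultimately have "card c \<noteq> 0" by simp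
    have "(\<Sum>y\<in>{y \<in> A. C y = c}. 1 / real (card (C y))) = (\<Sum>y\<in>c. 1 / real (card c))"
      unfolding fibre by (rule sum.cong) (use fibre in auto)
    also have "\<dots> = 1" using \<open>card c \<noteq> 0\<close> by (simp add: sum_constant)
    finally show "(\<Sum>y\<in>{y \<in> A. C y = c}. 1 / real (card (C y))) = 1" .
  qed
  finally show ?thesis by simp
qed

section \<open>Residues congruent to plus or minus x\<close>

definition plus_minus_class :: "nat \<Rightarrow> nat \<Rightarrow> nat \<Rightarrow> nat set" where
  "plus_minus_class n d x = {y. y < n \<and> ([y = x] (mod d) \<or> d dvd x + y)}"

lemma card_plus_minus_class:
  fixes n d x :: nat
  assumes "odd d" and "d dvd n"
  shows "card (plus_minus_class n d x) = (if d dvd x then 1 else 2) * (n div d)"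
proof -
  have "0 < d" using assms(1) by (rule odd_pos)
  from assms(2) obtain m where n: "n = m * d" by (metis dvdE mult.commute)
  let ?P = "{y. y < m * d \<and> [y = x] (mod d)}"
    and ?M = "{y. y < m * d \<and> [y = (d - 1) * x] (mod d)}"
  have split: "plus_minus_class n d x = ?P \<union> ?M"
    unfolding plus_minus_class_def dvd_add_iff_cong[OF \<open>0 < d\<close>] n by auto
  have card_P: "card ?P = m" and card_M: "card ?M = m"
    using card_cong_less_mult[OF \<open>0 < d\<close>] by blast+
  show ?thesis
  proof (cases "d dvd x")
    case True
    then obtain t where "x = d * t" by blast
    then have "[(d - 1) * x = x] (mod d)" by (simp add: cong_def)
    then have "?M = ?P" by (auto intro: cong_trans cong_sym)
    then show ?thesis using True split card_P n \<open>0 < d\<close> by simp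
  next
    case False
    have "?P \<inter> ?M = {}"
    proof (rule ccontr)
      assume "?P \<inter> ?M \<noteq> {}"
      then have "[x = (d - 1) * x] (mod d)" by (auto intro: cong_trans cong_sym)
      then have "d dvd 2 * x" using dvd_add_iff_cong[OF \<open>0 < d\<close>, of x x] by (simp add: mult_2)
      then show False using False assms(1) by (simp add: coprime_dvd_mult_right_iff)
    qed
    then have "card (plus_minus_class n d x) = card ?P + card ?M"
      unfolding split by (intro card_Un_disjoint) auto
    then show ?thesis using False card_P card_M n \<open>0 < d\<close> by simp
  qed
qed

lemma shift_mem_plus_minus_class_iff:
  fixes n d x a :: nat
  assumes "d dvd n" and "0 < n"
  shows "(x + a) mod n \<in> plus_minus_class n d x \<longleftrightarrow> d dvd a \<or> d dvd 2 * x + a"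
proof -
  have "[(x + a) mod n = x] (mod d) \<longleftrightarrow> [x + a = x] (mod d)"
    using assms(1) by (simp add: cong_def mod_mod_cancel)
  also have "\<dots> \<longleftrightarrow> d dvd a" by (simp add: cong_add_lcancel_0_nat cong_0_iff)
  finally have same: "[(x + a) mod n = x] (mod d) \<longleftrightarrow> d dvd a" .
  have "(x + (x + a) mod n) mod d = (x + (x + a) mod n mod d) mod d" by (simp add: mod_add_right_eq)
  also have "\<dots> = (2 * x + a) mod d"
    using assms(1) by (simp add: mod_mod_cancel mod_add_right_eq mult_2 add.assoc)
  finally have opposite: "d dvd x + (x + a) mod n \<longleftrightarrow> d dvd 2 * x + a"
    by (simp add: dvd_eq_mod_eq_0)
  show ?thesis unfolding plus_minus_class_def using same opposite assms(2) by simp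
qed

section \<open>The subgroup generated by q - 1\<close>

lemma power_one_plus_mult_cong:
  fixes n q c :: int
  assumes "n dvd q\<^sup>2"
  shows "[(1 + c * q) ^ i = 1 + int i * c * q] (mod n)"
proof (induction i)
  case (Suc i)
  have "[(1 + c * q) ^ Suc i = (1 + c * q) * (1 + int i * c * q)] (mod n)"
    using cong_scalar_left[OF Suc.IH] by simp
  also have "(1 + c * q) * (1 + int i * c * q) = 1 + int (Suc i) * c * q + int i * c\<^sup>2 * q\<^sup>2"
    by (simp add: algebra_simps power2_eq_square)
  also have "[\<dots> = 1 + int (Suc i) * c * q] (mod n)"
    using assms by (simp add: cong_add_lcancel_0 cong_0_iff)
  finally show ?case .
qed simp

lemma even_power_pred_cong:
  fixes m q :: nat and t :: int
  assumes "m dvd q" and "odd m"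
  obtains i where "[(int q - 1) ^ (2 * i) = 1 + t * int q] (mod int (m * q))"
proof -
  \<comment> \<open>Modulo \<open>m * q\<close>, \<open>(q - 1) ^ (2 * i) = 1 - 2 * i * q\<close>; choose \<open>2 * i = - t\<close> mod \<open>m\<close>.\<close>
  from assms(2) obtain b where m: "m = 2 * b + 1" by (elim oddE)
  define i where "i = nat (t mod int m * int b)"
  have two_i: "2 * int i = t mod int m * (int m - 1)"
    unfolding i_def m by simp
  have q_square: "int (m * q) dvd (int q)\<^sup>2" using assms(1) by (simp add: power2_eq_square)
  have "(int q - 1)\<^sup>2 = 1 + (int q - 2) * int q" by (simp add: power2_eq_square algebra_simps)
  then have "(int q - 1) ^ (2 * i) = (1 + (int q - 2) * int q) ^ i" by (simp only: power_mult)
  also have "[\<dots> = 1 + int i * (int q - 2) * int q] (mod int (m * q))"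
    using q_square by (rule power_one_plus_mult_cong)
  also have "[1 + int i * (int q - 2) * int q = 1 + t * int q] (mod int (m * q))"
  proof -
    have "t = t div int m * int m + t mod int m" by simp
    then have "1 + int i * (int q - 2) * int q - (1 + t * int q)
        = int i * (int q)\<^sup>2 - int m * int q * (t mod int m + t div int m)"
      using two_i by algebra
    also have "int (m * q) dvd \<dots>" using q_square by (simp add: mult.assoc)
    finally show ?thesis by (simp add: cong_iff_dvd_diff)
  qed
  finally show thesis by (rule that)
qed

lemma power_pred_cong_plus_minus_one:
  fixes m q :: nat and s :: int
  assumes "m dvd q" and "odd m" and "[s = 1] (mod int q) \<or> [s = - 1] (mod int q)"
  obtains e where "[(int q - 1) ^ e = s] (mod int (m * q))"
  using assms(3)
proof
  assume "[s = 1] (mod int q)"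
  then have "int q dvd s - 1" by (simp add: cong_iff_dvd_diff)
  then obtain k where "s - 1 = k * int q" by (metis dvdE mult.commute)
  then have "s = 1 + k * int q" by linarith
  moreover obtain i where "[(int q - 1) ^ (2 * i) = 1 + k * int q] (mod int (m * q))"
    using even_power_pred_cong[OF assms(1,2)] .
  ultimately show thesis by (intro that) simp
next
  assume "[s = - 1] (mod int q)"
  then have "int q dvd s + 1" by (simp add: cong_iff_dvd_diff)
  then obtain k where "s + 1 = k * int q" by (metis dvdE mult.commute)
  then have s: "s = - 1 + k * int q" by linarith
  obtain i where i: "[(int q - 1) ^ (2 * i) = 1 + (1 - k) * int q] (mod int (m * q))"
    using even_power_pred_cong[OF assms(1,2)] .
  have "(int q - 1) ^ (2 * i + 1) = (int q - 1) ^ (2 * i) * (int q - 1)"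
    by (simp only: power_add power_one_right)
  also have "[\<dots> = (1 + (1 - k) * int q) * (int q - 1)] (mod int (m * q))"
    using i by (rule cong_mult) simp
  also have "[(1 + (1 - k) * int q) * (int q - 1) = s] (mod int (m * q))"
  proof -
    have "(1 + (1 - k) * int q) * (int q - 1) - s = (1 - k) * (int q)\<^sup>2"
      unfolding s by (simp add: algebra_simps power2_eq_square)
    moreover have "int (m * q) dvd (1 - k) * (int q)\<^sup>2"
      using assms(1) by (simp add: power2_eq_square)
    ultimately show ?thesis by (simp add: cong_iff_dvd_diff)
  qed
  finally show thesis by (rule that)
qed

lemma cyc_subgroup_pred_eq:
  fixes m q :: nat
  assumes "m dvd q" and "odd m" and "0 < q"
  shows "cyc_subgroup (m * q) (q - 1) = plus_minus_class (m * q) q 1"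
proof -
  have class_iff: "s \<in> plus_minus_class (m * q) q 1 \<longleftrightarrow>
      s < m * q \<and> ([int s = 1] (mod int q) \<or> [int s = - 1] (mod int q))" for s
    unfolding plus_minus_class_def
    by (simp add: cong_iff_dvd_diff add.commute flip: cong_int_iff int_dvd_int_iff)
  have pred: "int (q - 1) = int q - 1" using assms(3) by simp
  show ?thesis
  proof (intro equalityI subsetI)
    fix s assume "s \<in> cyc_subgroup (m * q) (q - 1)"
    then obtain i where s: "s = (q - 1) ^ i mod (m * q)" unfolding cyc_subgroup_def by blast
    have "[int s = int ((q - 1) ^ i)] (mod int q)"
      unfolding s cong_int_iff by (simp add: cong_def mod_mod_cancel)
    also have "int ((q - 1) ^ i) = (int q - 1) ^ i" using pred by simp
    also have "[(int q - 1) ^ i = (- 1) ^ i] (mod int q)"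
      by (intro cong_pow) (simp add: cong_iff_dvd_diff)
    finally have "[int s = 1] (mod int q) \<or> [int s = - 1] (mod int q)"
      by (cases "even i") simp_all
    moreover have "s < m * q" using s assms odd_pos by simp
    ultimately show "s \<in> plus_minus_class (m * q) q 1" using class_iff by blast
  next
    fix s assume "s \<in> plus_minus_class (m * q) q 1"
    then have "s < m * q" and "[int s = 1] (mod int q) \<or> [int s = - 1] (mod int q)"
      using class_iff by blast+
    then obtain e where "[(int q - 1) ^ e = int s] (mod int (m * q))"
      using power_pred_cong_plus_minus_one[OF assms(1,2)] by blast
    then have "[(q - 1) ^ e = s] (mod m * q)" by (simp flip: pred cong_int_iff)
    then have "s = (q - 1) ^ e mod (m * q)" using \<open>s < m * q\<close> by (simp add: cong_def)
    then show "s \<in> cyc_subgroup (m * q) (q - 1)" unfolding cyc_subgroup_def by blast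
  qed
qed

lemma coset_of_pred_coprime:
  fixes m q x :: nat
  assumes "m dvd q" and "odd m" and "0 < q" and "coprime x (m * q)"
  shows "coset_of (m * q) (cyc_subgroup (m * q) (q - 1)) x = plus_minus_class (m * q) q x"
proof (intro equalityI subsetI)
  fix y assume "y \<in> coset_of (m * q) (cyc_subgroup (m * q) (q - 1)) x"
  then obtain s where s: "s \<in> plus_minus_class (m * q) q 1" and y: "y = x * s mod (m * q)"
    unfolding coset_of_def cyc_subgroup_pred_eq[OF assms(1-3)] by blast
  have y_q: "[y = x * s] (mod q)" unfolding y by (simp add: cong_def mod_mod_cancel)
  from s have "[s = 1] (mod q) \<or> q dvd 1 + s" unfolding plus_minus_class_def by blast
  then have "[y = x] (mod q) \<or> q dvd x + y"
  proof
    assume "[s = 1] (mod q)"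
    then have "[x * s = x * 1] (mod q)" by (rule cong_scalar_left)
    then show ?thesis using y_q by (simp add: cong_trans)
  next
    assume "q dvd 1 + s"
    then have "q dvd x + x * s" by (metis dvd_mult distrib_left mult_1_right)
    then show ?thesis using cong_imp_dvd_add_iff[OF y_q] by simp
  qed
  moreover have "y < m * q" using y assms(2,3) odd_pos by simp
  ultimately show "y \<in> plus_minus_class (m * q) q x" unfolding plus_minus_class_def by blast
next
  fix y assume "y \<in> plus_minus_class (m * q) q x"
  then have "y < m * q" and y_class: "[y = x] (mod q) \<or> q dvd x + y"
    unfolding plus_minus_class_def by auto
  obtain u where u: "[x * u = 1] (mod m * q)" using cong_solve_coprime_nat[OF assms(4)] by auto
  define s where "s = u * y mod (m * q)"
  have "[x * s = x * u * y] (mod m * q)" by (simp add: s_def cong_def mod_mult_right_eq mult.assoc)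
  also have "[x * u * y = 1 * y] (mod m * q)" using u by (rule cong_scalar_right)
  finally have "y = x * s mod (m * q)" using \<open>y < m * q\<close> by (simp add: cong_def)
  moreover have "s \<in> plus_minus_class (m * q) q 1"
  proof -
    have u_q: "[u * x = 1] (mod q)" using cong_dvd_modulus_nat[OF u, of q] by (simp add: mult.commute)
    have s_q: "[s = u * y] (mod q)" by (simp add: s_def cong_def mod_mod_cancel)
    from y_class have "[s = 1] (mod q) \<or> q dvd 1 + s"
    proof
      assume "[y = x] (mod q)"
      then have "[u * y = u * x] (mod q)" by (rule cong_scalar_left)
      then show ?thesis using s_q u_q by (blast intro: cong_trans)
    next
      assume "q dvd x + y"
      then have "q dvd u * x + u * y" by (metis dvd_mult distrib_left)
      also have "u * x + u * y = u * y + u * x" by simp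
      finally have "q dvd u * y + 1" using cong_imp_dvd_add_iff[OF u_q] by simp
      then show ?thesis using cong_imp_dvd_add_iff[OF s_q, of 1] by (simp add: add.commute)
    qed
    moreover have "s < m * q" using assms(2,3) odd_pos by (simp add: s_def)
    ultimately show ?thesis unfolding plus_minus_class_def by blast
  qed
  ultimately show "y \<in> coset_of (m * q) (cyc_subgroup (m * q) (q - 1)) x"
    unfolding coset_of_def cyc_subgroup_pred_eq[OF assms(1-3)] by blast
qed

lemma coset_of_pred_multiple:
  fixes m q x :: nat
  assumes "m dvd q" and "odd m" and "0 < q" and "m dvd x" and "x < m * q"
  shows "coset_of (m * q) (cyc_subgroup (m * q) (q - 1)) x = plus_minus_class (m * q) (m * q) x"
proof (intro equalityI subsetI)
  fix y assume "y \<in> coset_of (m * q) (cyc_subgroup (m * q) (q - 1)) x"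
  then obtain s where s: "s \<in> plus_minus_class (m * q) q 1" and y: "y = x * s mod (m * q)"
    unfolding coset_of_def cyc_subgroup_pred_eq[OF assms(1-3)] by blast
  obtain x' where x: "x = m * x'" using assms(4) by blast
  have y_n: "[y = x * s] (mod m * q)" unfolding y by (simp add: cong_def)
  from s have "[s = 1] (mod q) \<or> q dvd 1 + s" unfolding plus_minus_class_def by blast
  then have "[y = x] (mod m * q) \<or> m * q dvd x + y"
  proof
    assume "[s = 1] (mod q)"
    then have "[m * (x' * s) = m * (x' * 1)] (mod m * q)" by (intro cong_cmult_leftI cong_scalar_left)
    then have "[x * s = x] (mod m * q)" unfolding x by (simp add: mult.assoc)
    with y_n show ?thesis by (blast intro: cong_trans)
  next
    assume "q dvd 1 + s"
    then have "m * q dvd m * (x' * (1 + s))" by (intro mult_dvd_mono dvd_refl dvd_mult)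
    then have "m * q dvd x + x * s" unfolding x by (simp add: algebra_simps)
    then show ?thesis using cong_imp_dvd_add_iff[OF y_n] by simp
  qed
  moreover have "y < m * q" unfolding y using assms(5) by (intro mod_less_divisor) linarith
  ultimately show "y \<in> plus_minus_class (m * q) (m * q) x" unfolding plus_minus_class_def by blast
next
  fix y assume "y \<in> plus_minus_class (m * q) (m * q) x"
  then have "y < m * q" and "[y = x] (mod m * q) \<or> m * q dvd x + y"
    unfolding plus_minus_class_def by auto
  then show "y \<in> coset_of (m * q) (cyc_subgroup (m * q) (q - 1)) x"
  proof (elim disjE)
    assume "[y = x] (mod m * q)"
    then have "y = x" using \<open>y < m * q\<close> assms(5) by (rule cong_less_modulus_unique_nat)
    then show ?thesis using assms(5) by (simp add: mem_coset_of_cyc_subgroup_self)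
  next
    assume "m * q dvd x + y"
    define s where "s = m * q - 1"
    have "0 < m * q" using assms(5) by linarith
    then have "s \<in> plus_minus_class (m * q) q 1" by (simp add: s_def plus_minus_class_def)
    have "x * s + x = x * (s + 1)" by simp
    also have "s + 1 = m * q" using \<open>0 < m * q\<close> by (simp add: s_def)
    finally have "[x * s + x = y + x] (mod m * q)"
      using \<open>m * q dvd x + y\<close> by (simp add: cong_def add.commute dvd_eq_mod_eq_0)
    then have "[x * s = y] (mod m * q)" by (simp only: cong_add_rcancel_nat)
    then have "y = x * s mod (m * q)" using \<open>y < m * q\<close> by (simp add: cong_def)
    with \<open>s \<in> plus_minus_class (m * q) q 1\<close> show ?thesis
      unfolding coset_of_def cyc_subgroup_pred_eq[OF assms(1-3)] by blast
  qed
qed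

section \<open>Odd prime powers\<close>

locale odd_prime_power =
  fixes p j :: nat
  assumes prime_p: "prime p" and odd_p: "odd p" and j_pos: "0 < j"
begin

abbreviation q :: nat where "q \<equiv> p ^ j"

abbreviation G :: "nat set" where "G \<equiv> cyc_subgroup (p * q) (q - 1)"

lemma q_eq: "q = p * p ^ (j - 1)"
  using j_pos by (simp flip: power_Suc)

lemma p_dvd_q: "p dvd q"
  using q_eq by simp

lemma q_pos: "0 < q"
  using prime_p by (simp add: prime_gt_0_nat)

lemma odd_q: "odd q"
  using odd_p by simp

lemma modulus_pos: "0 < p * q"
  using q_pos prime_gt_0_nat[OF prime_p] by simp

lemma p_dvd_double_add_iff:
  assumes "p dvd 2 * x + a"
  shows "p dvd x \<longleftrightarrow> p dvd a"
proof -
  have "\<not> p dvd 2"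
  proof
    assume "p dvd 2"
    then have "p \<le> 2" by (rule dvd_imp_le) simp
    then show False using prime_ge_2_nat[OF prime_p] odd_p by simp
  qed
  then have "p dvd x \<longleftrightarrow> p dvd 2 * x" using prime_p by (simp add: prime_dvd_mult_iff)
  also have "\<dots> \<longleftrightarrow> p dvd a" using assms dvd_add_right_iff dvd_add_left_iff by blast
  finally show ?thesis .
qed

lemma coprime_iff_not_dvd: "coprime x (p * q) \<longleftrightarrow> \<not> p dvd x"
proof -
  have "coprime x (p * q) \<longleftrightarrow> coprime x p" by (simp flip: power_Suc)
  also have "\<dots> \<longleftrightarrow> \<not> p dvd x"
  proof
    assume "coprime x p"
    then show "\<not> p dvd x" using prime_p by (metis coprime_common_divisor dvd_refl not_prime_unit)
  next
    assume "\<not> p dvd x"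
    then have "coprime p x" by (rule prime_imp_coprime[OF prime_p])
    then show "coprime x p" by (rule coprime_commute[THEN iffD1])
  qed
  finally show ?thesis .
qed

lemma coprime_generator: "coprime (q - 1) (p * q)"
proof -
  have "\<not> p dvd q - 1"
  proof
    assume "p dvd q - 1"
    then have "p dvd q - (q - 1)" using p_dvd_q by (rule dvd_diff_nat[rotated])
    then show False using q_pos prime_p by (simp add: not_prime_1)
  qed
  then show ?thesis using coprime_iff_not_dvd by blast
qed

lemma coset_of_G:
  assumes "x < p * q"
  shows "coset_of (p * q) G x = plus_minus_class (p * q) (if p dvd x then p * q else q) x"
  using coset_of_pred_multiple[OF p_dvd_q _ q_pos _ assms] coset_of_pred_coprime[OF p_dvd_q _ q_pos]
    odd_p coprime_iff_not_dvd by auto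

lemma card_coset_of_G:
  assumes "x < p * q"
  shows "card (coset_of (p * q) G x) = (if p dvd x then if x = 0 then 1 else 2 else 2 * p)"
proof (cases "p dvd x")
  case True
  have "card (coset_of (p * q) G x) = card (plus_minus_class (p * q) (p * q) x)"
    unfolding coset_of_G[OF assms] using True by simp
  also have "\<dots> = (if p * q dvd x then 1 else 2) * (p * q div (p * q))"
    using odd_p by (intro card_plus_minus_class) simp_all
  also have "p * q dvd x \<longleftrightarrow> x = 0" using assms by (auto dest: dvd_imp_le)
  finally show ?thesis using True q_pos prime_gt_0_nat[OF prime_p] by simp
next
  case False
  then have "\<not> q dvd x" using p_dvd_q dvd_trans by blast
  have "card (coset_of (p * q) G x) = card (plus_minus_class (p * q) q x)"
    unfolding coset_of_G[OF assms] using False by simp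
  also have "\<dots> = (if q dvd x then 1 else 2) * (p * q div q)"
    using odd_p by (intro card_plus_minus_class) simp_all
  finally show ?thesis using False \<open>\<not> q dvd x\<close> q_pos by simp
qed

lemma card_multiples: "card {x. x < p * q \<and> p dvd x} = q"
proof -
  have "{x. x < p * q \<and> p dvd x} = {x. x < q * p \<and> [x = 0] (mod p)}"
    by (simp add: cong_0_iff mult.commute)
  then show ?thesis using card_cong_less_mult[of p q 0] prime_gt_0_nat[OF prime_p] by simp
qed

lemma card_non_multiples: "card {x. x < p * q \<and> \<not> p dvd x} = p * q - q"
proof -
  have "{x. x < p * q \<and> \<not> p dvd x} = {..<p * q} - {x. x < p * q \<and> p dvd x}" by auto
  then show ?thesis
    using card_multiples card_Diff_subset[of "{x. x < p * q \<and> p dvd x}" "{..<p * q}"] by auto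
qed

lemma real_card_cosets_D:
  "real (card (cosets_D (p * q) G)) = (\<Sum>x<p * q. 1 / real (card (coset_of (p * q) G x)))"
  unfolding cosets_D_eq_image
proof (rule card_image_eq_sum_inverse_card)
  show "x \<in> coset_of (p * q) G x" if "x \<in> {..<p * q}" for x
    using that by (intro mem_coset_of_cyc_subgroup_self) simp
  show "coset_of (p * q) G x \<subseteq> {..<p * q}" for x
    using modulus_pos by (auto simp: coset_of_def)
  show "coset_of (p * q) G y = coset_of (p * q) G x"
    if "x \<in> {..<p * q}" and "y \<in> coset_of (p * q) G x" for x y
    using that by (intro coset_of_cyc_subgroup_eq[OF coprime_generator]) simp_all
qed simp

lemma sum_inverse_card_coset_of_G:
  "(\<Sum>x<p * q. 1 / real (card (coset_of (p * q) G x)))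
    = 1 + real (q - 1) / 2 + real (p * q - q) / (2 * real p)"
proof -
  let ?M = "{..<p * q} \<inter> {x. p dvd x}" and ?U = "{..<p * q} \<inter> - {x. p dvd x}"
  have "(\<Sum>x<p * q. 1 / real (card (coset_of (p * q) G x)))
      = (\<Sum>x<p * q. if p dvd x then if x = 0 then 1 else 1 / 2 else 1 / (2 * real p))"
  proof (rule sum.cong[OF refl])
    fix x assume "x \<in> {..<p * q}"
    then have "card (coset_of (p * q) G x) = (if p dvd x then if x = 0 then 1 else 2 else 2 * p)"
      by (intro card_coset_of_G) simp
    then show "1 / real (card (coset_of (p * q) G x))
        = (if p dvd x then if x = 0 then 1 else 1 / 2 else 1 / (2 * real p))"
      by simp
  qed
  also have "\<dots> = (\<Sum>x\<in>?M. if x = 0 then 1 else 1 / 2) + (\<Sum>x\<in>?U. 1 / (2 * real p))"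
    by (rule sum.If_cases) simp
  also have "(\<Sum>x\<in>?M. if x = 0 then 1 else 1 / 2) = 1 + (\<Sum>x\<in>?M - {0}. 1 / 2 :: real)"
    using modulus_pos by (subst sum.remove[of _ 0]) auto
  finally have sum_eq: "(\<Sum>x<p * q. 1 / real (card (coset_of (p * q) G x)))
      = 1 + (\<Sum>x\<in>?M - {0}. 1 / 2) + (\<Sum>x\<in>?U. 1 / (2 * real p))" .
  have "card (?M - {0}) = q - 1"
    using card_multiples modulus_pos by (simp add: Int_def card_Diff_singleton_if lessThan_def)
  moreover have "card ?U = p * q - q"
    using card_non_multiples by (simp add: Int_def lessThan_def)
  ultimately show ?thesis using sum_eq by simp
qed

lemma card_cosets_D: "card (cosets_D (p * q) G) = (2 * q - p ^ (j - 1) + 1) div 2"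
proof -
  have "real (p * q - q) / real p = real q - real (p ^ (j - 1))"
    using prime_gt_0_nat[OF prime_p] q_eq by (simp add: of_nat_diff field_simps)
  then have "2 * real (card (cosets_D (p * q) G)) = 2 + real (q - 1) + (real q - real (p ^ (j - 1)))"
    unfolding real_card_cosets_D sum_inverse_card_coset_of_G
    using prime_gt_0_nat[OF prime_p] by (simp add: field_simps)
  moreover have "p ^ (j - 1) \<le> q" by (metis dvd_imp_le dvd_triv_right q_eq q_pos)
  ultimately have "real (2 * card (cosets_D (p * q) G)) = real (2 * q - p ^ (j - 1) + 1)"
    using q_pos by (simp add: of_nat_diff)
  then have "2 * card (cosets_D (p * q) G) = 2 * q - p ^ (j - 1) + 1" by (simp only: of_nat_eq_iff)
  from this[symmetric] show ?thesis by simp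
qed

lemma shift_mem_coset_of_G_iff:
  assumes "0 < a" and "a < p * q" and "x < p * q"
  shows "(x + a) mod (p * q) \<in> coset_of (p * q) G x \<longleftrightarrow>
    (if p dvd x then p * q dvd 2 * x + a else q dvd a \<or> q dvd 2 * x + a)"
proof (cases "p dvd x")
  case True
  have "\<not> p * q dvd a" using assms(1,2) by (auto dest: dvd_imp_le)
  then show ?thesis unfolding coset_of_G[OF assms(3)]
    using True shift_mem_plus_minus_class_iff[of "p * q" "p * q" x a] modulus_pos by simp
next
  case False
  then show ?thesis unfolding coset_of_G[OF assms(3)]
    using shift_mem_plus_minus_class_iff[of q "p * q" x a] modulus_pos by simp
qed

lemma card_shift_mem_coset_of_G:
  assumes "0 < a" and "a < p * q"
  shows "card {x. x < p * q \<and> (x + a) mod (p * q) \<in> coset_of (p * q) G x} \<in> {1, p, p * q - q + 1}"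
proof -
  let ?S = "{x. x < p * q \<and> (x + a) mod (p * q) \<in> coset_of (p * q) G x}"
  have S_iff: "x \<in> ?S \<longleftrightarrow> x < p * q \<and>
      (if p dvd x then p * q dvd 2 * x + a else q dvd a \<or> q dvd 2 * x + a)" for x
    using shift_mem_coset_of_G_iff[OF assms] by auto
  have p_dvd_iff: "p dvd x \<longleftrightarrow> p dvd a" if "d dvd 2 * x + a" and "p dvd d" for d x
    using p_dvd_double_add_iff dvd_trans that by blast
  consider (not_multiple) "\<not> p dvd a" | (multiple) "p dvd a" "\<not> q dvd a" | (q_multiple) "q dvd a"
    by blast
  then show ?thesis
  proof cases
    case not_multiple
    then have "\<not> q dvd a" using p_dvd_q dvd_trans by blast
    have "?S = {x. x < p * q \<and> q dvd 2 * x + a}"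
      using S_iff p_dvd_iff[of q] p_dvd_iff[of "p * q"] not_multiple \<open>\<not> q dvd a\<close> p_dvd_q
      by auto
    then show ?thesis using card_dvd_double_add_less_mult[of q p a] odd_q by simp
  next
    case multiple
    have "?S = {x. x < 1 * (p * q) \<and> p * q dvd 2 * x + a}"
      using S_iff p_dvd_iff[of q] p_dvd_iff[of "p * q"] multiple p_dvd_q by auto
    then show ?thesis using card_dvd_double_add_less_mult[of "p * q" 1 a] odd_p odd_q by simp
  next
    case q_multiple
    then have "p dvd a" using p_dvd_q by (rule dvd_trans[rotated])
    have "?S = {x. x < p * q \<and> \<not> p dvd x} \<union> {x. x < 1 * (p * q) \<and> p * q dvd 2 * x + a}"
      using S_iff p_dvd_iff[of "p * q"] q_multiple \<open>p dvd a\<close> by auto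
    moreover have "{x. x < p * q \<and> \<not> p dvd x} \<inter> {x. x < 1 * (p * q) \<and> p * q dvd 2 * x + a} = {}"
      using p_dvd_iff[of "p * q"] \<open>p dvd a\<close> by auto
    ultimately have "card ?S = (p * q - q) + 1"
      using card_non_multiples card_dvd_double_add_less_mult[of "p * q" 1 a] odd_p odd_q
      by (simp add: card_Un_disjoint)
    then show ?thesis by simp
  qed
qed

end

theorem theorem3p6:
  fixes p k :: nat and h :: "nat set \<Rightarrow> nat"
  assumes "prime p" and "odd p" and "k > 2"
    and "bij_betw h (cosets_D (p ^ k) (cyc_subgroup (p ^ k) (p ^ (k - 1) - 1)))
           {0..<card (cosets_D (p ^ k) (cyc_subgroup (p ^ k) (p ^ (k - 1) - 1)))}"
  shows "zero_difference_fun (p ^ k) ((2 * p ^ (k - 1) - p ^ (k - 2) + 1) div 2)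
           {1, p, p ^ k - p ^ (k - 1) + 1}
           (coset_index_fun (p ^ k) (cyc_subgroup (p ^ k) (p ^ (k - 1) - 1)) h)"
proof -
  interpret odd_prime_power p "k - 1" using assms(1-3) by unfold_locales simp_all
  have modulus_eq: "p ^ k = p * p ^ (k - 1)" using assms(3) by (simp flip: power_Suc)
  have exponent_eq: "k - 2 = k - 1 - 1" by simp
  let ?f = "coset_index_fun (p * q) G h"
  have inj: "inj_on h (cosets_D (p * q) G)"
    using assms(4) unfolding modulus_eq by (rule bij_betw_imp_inj_on)
  have "card (?f ` {0..<p * q}) = (2 * q - p ^ (k - 1 - 1) + 1) div 2"
    using card_image_coset_index_fun[OF inj] card_cosets_D by simp
  moreover have "card {x \<in> {0..<p * q}. ?f ((x + a) mod (p * q)) = ?f x} \<in> {1, p, p * q - q + 1}"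
    if "a \<in> {0..<p * q}" and "a \<noteq> 0" for a
  proof -
    have "{x \<in> {0..<p * q}. ?f ((x + a) mod (p * q)) = ?f x}
        = {x. x < p * q \<and> (x + a) mod (p * q) \<in> coset_of (p * q) G x}"
      using coset_index_fun_eq_iff[OF inj coprime_generator] modulus_pos by auto
    then show ?thesis using card_shift_mem_coset_of_G that by simp
  qed
  ultimately show ?thesis unfolding zero_difference_fun_def modulus_eq exponent_eq by blast
qed

end
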